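(* Let $k\ge1$ and $b_1,\dots,b_k\in\mathbb{F}_q$, and set $(a_1,\dots,a_k):=G(b_1,\dots,b_k)$. Then, as permutations of $\mathbb{P}^1(\mathbb{F}_q)$, $$(b_1,\infty)\circ(b_2,\infty)\circ\cdots\circ(b_k,\infty)=\mu(x)\circ x^{q-2}\circ(x-a_k)\circ x^{q-2}\circ(x-a_{k-1})\circ\cdots\circ x^{q-2}\circ(x-a_1),$$ where $\mu(x):=(x+a_1)\circ x^{-1}\circ(x+a_2)\circ x^{-1}\circ\cdots\circ(x+a_k)\circ x^{-1}$, which is a degree-one rational function in $\mathbb{F}_q(x)$.
   Context: Let $q>2$ be a prime power, $\mathbb{F}_q$ the field with $q$ elements, $\mathbb{P}^1(\mathbb{F}_q)=\mathbb{F}_q\cup\{\infty\}$. Degree-one rational functions in $\mathbb{F}_q(x)$ act on $\mathbb{P}^1(\mathbb{F}_q)$ with the usual conventions (e.g. $x^{-1}$ swaps $0$ and $\infty$, polynomials fix $\infty$). $x^{q-2}$ acts on $\mathbb{P}^1(\mathbb{F}_q)$ by fixing $0$ and $\infty$ and sending $c\in\mathbb{F}_q^*$ to $c^{q-2}=c^{-1}$; for $c\in\mathbb{F}_q$, $c^{q-2}$ also denotes the field element ($0^{q-2}=0$). For $b\in\mathbb{F}_q$, $(b,\infty)$ is the transposition swapping $b$ and $\infty$. Composition is $(f\circ g)(x)=f(g(x))$. For $2\le\ell\le k$ let $\Phi_\ell:\mathbb{F}_q^\ell\to\mathbb{F}_q^{\ell-1}$ send $(e_1,\dots,e_\ell)$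 to $((e_2-e_1)^{q-2},(e_3-e_1)^{q-2},\dots,(e_\ell-e_1)^{q-2})$. The map $G:\mathbb{F}_q^k\to\mathbb{F}_q^k$ sends $(b_1,\dots,b_k)$ to $(a_1,\dots,a_k)$ where $a_i$ is the first entry of $\Phi_{k-i+2}\circ\Phi_{k-i+3}\circ\cdots\circ\Phi_k(b_1,\dots,b_k)\in\mathbb{F}_q^{k-i+1}$ (for $i=1$ this composite is the identity, so $a_1=b_1$). *)

theory Defs
  imports Main "HOL-Library.Cardinality"
begin

text \<open>P^1(F_q) is modelled as 'a option, with None = infinity, Some c = c.
  F_q is a finite field type 'a; q = CARD('a).\<close>

definition p1_transp :: "'a \<Rightarrow> 'a option \<Rightarrow> 'a option" where
  "p1_transp b z = (if z = Some b then None else if z = None then Some b else z)"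

definition p1_pow_qm2 :: "'a::{field,finite} option \<Rightarrow> 'a option" where
  "p1_pow_qm2 z = (case z of None \<Rightarrow> None | Some c \<Rightarrow> Some (c ^ (CARD('a) - 2)))"

definition p1_inv :: "'a::field option \<Rightarrow> 'a option" where
  "p1_inv z = (case z of None \<Rightarrow> Some 0 | Some c \<Rightarrow> (if c = 0 then None else Some (inverse c)))"

definition p1_add :: "'a::field \<Rightarrow> 'a option \<Rightarrow> 'a option" where
  "p1_add a z = (case z of None \<Rightarrow> None | Some c \<Rightarrow> Some (c + a))"

definition p1_mobius :: "'a::field \<Rightarrow> 'a \<Rightarrow> 'a \<Rightarrow> 'a \<Rightarrow> 'a option \<Rightarrow> 'a option" where
  "p1_mobius al be ga de z = (case z of
      None \<Rightarrow> (if ga = 0 then None else Some (al / ga))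
    | Some c \<Rightarrow> (if ga * c + de = 0 then None else Some ((al * c + be) / (ga * c + de))))"

fun Phi :: "'a::{field,finite} list \<Rightarrow> 'a list" where
  "Phi [] = []"
| "Phi (e # es) = map (\<lambda>x. (x - e) ^ (CARD('a) - 2)) es"

definition G :: "'a::{field,finite} list \<Rightarrow> 'a list" where
  "G bs = map (\<lambda>i. hd ((Phi ^^ i) bs)) [0..<length bs]"

definition comp_list :: "('b \<Rightarrow> 'b) list \<Rightarrow> 'b \<Rightarrow> 'b" where
  "comp_list fs = foldr (\<circ>) fs id"

end

theory Submission
  imports Defs
begin

text \<open>On \<open>\<bbbF>\<^sub>q\<close> the monomial \<open>x\<^sup>q\<^sup>-\<^sup>2\<close> agrees with \<open>x\<^sup>-\<^sup>1\<close> except that it fixes \<open>0\<close>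
  and \<open>\<infinity>\<close>, so \<open>(x + b) \<circ> x\<^sup>-\<^sup>1 \<circ> x\<^sup>q\<^sup>-\<^sup>2 \<circ> (x - b)\<close> is exactly the transposition
  \<open>(b, \<infinity>)\<close>. Peeling this factor off the first transposition leaves
  \<open>x\<^sup>q\<^sup>-\<^sup>2 \<circ> (x - b\<^sub>1)\<close> to be pushed through \<open>(b\<^sub>2,\<infinity>) \<circ> \<dots> \<circ> (b\<^sub>k,\<infinity>)\<close>; this map is a
  bijection fixing \<open>\<infinity>\<close>, so conjugation by it turns each \<open>(b\<^sub>i,\<infinity>)\<close> into
  \<open>((b\<^sub>i - b\<^sub>1)\<^sup>q\<^sup>-\<^sup>2, \<infinity>)\<close>, i.e. replaces the tail of \<open>b\<close> by its image under \<open>\<Phi>\<close>.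
  Induction on \<open>k\<close> then yields the factorization, and \<open>\<mu>\<close> is a degree-one rational
  function because each \<open>(x + a) \<circ> x\<^sup>-\<^sup>1\<close> is one and these compose like \<open>2\<times>2\<close> matrices.\<close>

lemma power_card_minus_one_eq_1:
  fixes c :: "'a::{field,finite}"
  assumes "c \<noteq> 0"
  shows "c ^ (CARD('a) - 1) = 1"
proof -
  let ?U = "UNIV - {0::'a}"
  have "bij_betw ((*) c) ?U ?U"
  proof (rule bij_betwI')
    fix y assume "y \<in> ?U"
    then show "\<exists>x\<in>?U. y = c * x"
      using assms by (intro bexI[of _ "y / c"]) auto
  qed (use assms in auto)
  then have "prod id ?U = (\<Prod>x\<in>?U. c * x)"
    using prod.reindex_bij_betw[of "(*) c" ?U ?U id] by simp
  also have "\<dots> = c ^ card ?U * prod id ?U"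
    by (simp add: prod.distrib)
  finally show ?thesis
    by (simp add: card_Diff_singleton)
qed

lemma power_card_minus_two_eq_inverse:
  fixes c :: "'a::{field,finite}"
  assumes "CARD('a) > 2"
  shows "c ^ (CARD('a) - 2) = inverse c"
proof (cases "c = 0")
  case True
  then show ?thesis using assms by simp
next
  case False
  have "CARD('a) - 1 = Suc (CARD('a) - 2)"
    using assms by simp
  then have "c * c ^ (CARD('a) - 2) = 1"
    using power_card_minus_one_eq_1[OF False] by simp
  then show ?thesis
    using False by (simp add: field_simps)
qed

lemma comp_list_Nil [simp]: "comp_list [] = id"
  by (simp add: comp_list_def)

lemma comp_list_Cons [simp]: "comp_list (f # fs) = f \<circ> comp_list fs"
  by (simp add: comp_list_def)

lemma comp_list_append [simp]: "comp_list (fs @ gs) = comp_list fs \<circ> comp_list gs"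
  by (induction fs) auto

lemma G_Nil [simp]: "G [] = []"
  by (simp add: G_def)

lemma G_Cons: "G (b # bs) = b # G (Phi (b # bs))"
proof -
  have "length (Phi (b # bs)) = length bs"
    by simp
  then show ?thesis
    unfolding G_def
    by (simp add: map_upt_Suc funpow_Suc_right del: upt_Suc Phi.simps funpow.simps)
qed

lemma p1_transp_conj:
  assumes "inj h" and "h None = None" and "h (Some b) = Some c"
  shows "p1_transp c \<circ> h = h \<circ> p1_transp b"
proof
  fix z
  have "h z = Some c \<longleftrightarrow> z = Some b" and "h z = None \<longleftrightarrow> z = None"
    using assms by (metis injD)+
  then show "(p1_transp c \<circ> h) z = (h \<circ> p1_transp b) z"
    using assms(2,3) by (auto simp: p1_transp_def)
qed

lemma comp_list_p1_transp_conj: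
  assumes "inj h" and "h None = None" and "\<And>b. b \<in> set bs \<Longrightarrow> h (Some b) = Some (f b)"
  shows "comp_list (map p1_transp (map f bs)) \<circ> h = h \<circ> comp_list (map p1_transp bs)"
  using assms(3)
proof (induction bs)
  case Nil
  then show ?case by simp
next
  case (Cons b bs)
  have IH: "comp_list (map p1_transp (map f bs)) \<circ> h = h \<circ> comp_list (map p1_transp bs)"
    using Cons.prems by (intro Cons.IH) simp
  have "comp_list (map p1_transp (map f (b # bs))) \<circ> h
      = p1_transp (f b) \<circ> (comp_list (map p1_transp (map f bs)) \<circ> h)"
    by (simp add: comp_assoc)
  also have "\<dots> = (p1_transp (f b) \<circ> h) \<circ> comp_list (map p1_transp bs)"
    unfolding IH by (simp add: comp_assoc)
  also have "\<dots> = h \<circ> comp_list (map p1_transp (b # bs))"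
    using p1_transp_conj[OF assms(1,2) Cons.prems[of b]] by (simp add: comp_assoc)
  finally show ?case .
qed

lemma inj_p1_add: "inj (p1_add a)"
  by (rule injI) (auto simp: p1_add_def split: option.splits)

lemma inj_p1_pow_qm2:
  assumes "CARD('a::{field,finite}) > 2"
  shows "inj (p1_pow_qm2 :: 'a option \<Rightarrow> 'a option)"
  by (rule injI)
    (auto simp: p1_pow_qm2_def power_card_minus_two_eq_inverse[OF assms] split: option.splits)

lemma p1_transp_factorization:
  assumes "CARD('a::{field,finite}) > 2"
  shows "p1_add b \<circ> p1_inv \<circ> (p1_pow_qm2 \<circ> p1_add (- b)) = p1_transp (b::'a)"
proof
  fix z
  show "(p1_add b \<circ> p1_inv \<circ> (p1_pow_qm2 \<circ> p1_add (- b))) z = p1_transp b z"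
    by (cases z) (auto simp: p1_add_def p1_inv_def p1_pow_qm2_def p1_transp_def
        power_card_minus_two_eq_inverse[OF assms])
qed

lemma comp_list_p1_transp_factorization:
  fixes bs :: "'a::{field,finite} list"
  assumes "CARD('a) > 2"
  shows "comp_list (map p1_transp bs)
       = comp_list (map (\<lambda>a. p1_add a \<circ> p1_inv) (G bs))
         \<circ> comp_list (map (\<lambda>a. p1_pow_qm2 \<circ> p1_add (- a)) (rev (G bs)))"
proof (induction bs rule: length_induct)
  case (1 bs)
  show ?case
  proof (cases bs)
    case Nil
    then show ?thesis by simp
  next
    case (Cons b bs')
    define f where "f x = (x - b) ^ (CARD('a) - 2)" for x :: 'a
    define h where "h = p1_pow_qm2 \<circ> p1_add (- b)"
    have Phi_eq: "Phi (b # bs') = map f bs'"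
      by (simp add: f_def)
    have conj: "comp_list (map p1_transp (map f bs')) \<circ> h = h \<circ> comp_list (map p1_transp bs')"
    proof (rule comp_list_p1_transp_conj)
      show "inj h"
        unfolding h_def using inj_p1_pow_qm2[OF assms] inj_p1_add by (rule inj_compose)
    qed (simp_all add: h_def f_def p1_pow_qm2_def p1_add_def)
    have IH: "comp_list (map p1_transp (map f bs'))
        = comp_list (map (\<lambda>a. p1_add a \<circ> p1_inv) (G (map f bs')))
          \<circ> comp_list (map (\<lambda>a. p1_pow_qm2 \<circ> p1_add (- a)) (rev (G (map f bs'))))"
      using Cons by (intro "1.IH"[rule_format]) simp
    have "comp_list (map (\<lambda>a. p1_add a \<circ> p1_inv) (G bs))
          \<circ> comp_list (map (\<lambda>a. p1_pow_qm2 \<circ> p1_add (- a)) (rev (G bs)))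
        = p1_add b \<circ> p1_inv \<circ> (comp_list (map p1_transp (map f bs')) \<circ> h)"
      unfolding Cons G_Cons Phi_eq IH h_def by (simp add: comp_assoc)
    also have "\<dots> = (p1_add b \<circ> p1_inv \<circ> h) \<circ> comp_list (map p1_transp bs')"
      unfolding conj by (simp add: comp_assoc)
    also have "\<dots> = comp_list (map p1_transp bs)"
      unfolding h_def p1_transp_factorization[OF assms] Cons by simp
    finally show ?thesis ..
  qed
qed

lemma p1_add_inv_comp_mobius:
  assumes det: "al * de - be * ga \<noteq> (0::'a::field)"
  shows "p1_add a \<circ> p1_inv \<circ> p1_mobius al be ga de = p1_mobius (ga + a * al) (de + a * be) al be"
proof
  fix z
  show "(p1_add a \<circ> p1_inv \<circ> p1_mobius al be ga de) z = p1_mobius (ga + a * al) (de + a * be) al be z"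
  proof (cases z)
    case None
    then show ?thesis
      using det by (auto simp: p1_add_def p1_inv_def p1_mobius_def field_simps)
  next
    case (Some c)
    have "(ga + a * al) * c + (de + a * be) = (ga * c + de) + a * (al * c + be)"
      by (simp add: algebra_simps)
    moreover have "ga * c + de \<noteq> 0 \<or> al * c + be \<noteq> 0"
    proof -
      have "al * de - be * ga = al * (ga * c + de) - ga * (al * c + be)"
        by (simp add: algebra_simps)
      then show ?thesis using det by auto
    qed
    ultimately show ?thesis
      using Some by (auto simp: p1_add_def p1_inv_def p1_mobius_def field_simps)
  qed
qed

lemma comp_list_p1_add_inv_is_mobius:
  "\<exists>al be ga de. al * de - be * ga \<noteq> (0::'a::field)
     \<and> comp_list (map (\<lambda>a. p1_add a \<circ> p1_inv) as) = p1_mobius al be ga de"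
proof (induction as)
  case Nil
  have "comp_list (map (\<lambda>a. p1_add a \<circ> p1_inv) []) = p1_mobius 1 0 0 (1::'a)"
    by (rule ext) (simp add: p1_mobius_def split: option.split)
  then show ?case
    by (intro exI[of _ 1] exI[of _ 0] exI[of _ 0] exI[of _ 1]) simp
next
  case (Cons a as)
  then obtain al be ga de where det: "al * de - be * ga \<noteq> (0::'a)"
    and eq: "comp_list (map (\<lambda>a. p1_add a \<circ> p1_inv) as) = p1_mobius al be ga de"
    by blast
  have "(ga + a * al) * be - (de + a * be) * al = - (al * de - be * ga)"
    by (simp add: algebra_simps)
  then have "(ga + a * al) * be - (de + a * be) * al \<noteq> 0"
    using det by simp
  moreover have "comp_list (map (\<lambda>a. p1_add a \<circ> p1_inv) (a # as))
      = p1_mobius (ga + a * al) (de + a * be) al be"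
    using p1_add_inv_comp_mobius[OF det, of a] eq by (simp only: comp_list_Cons list.map)
  ultimately show ?case
    by blast
qed

theorem theorem3p3:
  fixes bs :: "'a::{field,finite} list" and k :: nat
  assumes "CARD('a) > 2" and "k \<ge> 1" and "length bs = k"
  defines "as \<equiv> G bs"
  defines "\<mu> \<equiv> comp_list (map (\<lambda>a. p1_add a \<circ> p1_inv) as)"
  shows "comp_list (map p1_transp bs)
           = \<mu> \<circ> comp_list (map (\<lambda>a. p1_pow_qm2 \<circ> p1_add (- a)) (rev as))
       \<and> (\<exists>al be ga de. al * de - be * ga \<noteq> 0 \<and> \<mu> = p1_mobius al be ga de)"
  using comp_list_p1_transp_factorization[OF assms(1), of bs] comp_list_p1_add_inv_is_mobius[of as]
  unfolding as_def \<mu>_def by simp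

end
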